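(* Let $\Sigma$ be an alphabet and let $\mathcal P=(n,\Gamma,I,M,P,p_0,l)$ be a $\mathbb B\langle\Sigma\cup\{\epsilon\}\rangle$-$\omega$-pushdown automaton over $(\mathbb B\langle\langle\Sigma^*\rangle\rangle,\mathbb B\langle\langle\Sigma^\omega\rangle\rangle)$, and let $G_l$ be the mixed context-free grammar constructed from $\mathcal P$. Then $$L(G_l)=\|\mathcal P\|,$$ where $\|\mathcal P\|=I(M^* )_{p_0,\epsilon}P+I(M^{\omega,l})_{p_0}$ is identified with the set $\operatorname{supp}(I(M^* )_{p_0,\epsilon}P)\cup\operatorname{supp}(I(M^{\omega,l})_{p_0})\subseteq\Sigma^*\cup\Sigma^\omega$.
   Context: $\mathbb B=(\{0,1\},\vee,\wedge,{}^*,0,1)$ with $0^*=1^*=1$; $(\mathbb B\langle\langle\Sigma^*\rangle\rangle,\mathbb B\langle\langle\Sigma^\omega\rangle\rangle)$ (power series over finite/infinite words, identified with languages) is a complete semiring-semimodule pair (infinite sums = unions, infinite products = concatenations). $(s,a)$ is the coefficient of $a$ in $s$; $\mathbb B\langle\Sigma\cup\{\epsilon\}\rangle$ is the set of series with support in $\Sigma\cup\{\epsilon\}$. A pushdown transition matrix $M$ ($\Gamma^*\times\Gamma^*$ matrix with $n\times n$ blocks over $\mathbb B\langle\Sigma\cup\{\epsilon\}\rangle$) satisfies (i) for each $p\in\Gamma$ only finitely many blocks $M_{p,\pi}$ are nonzero, and (ii) $M_{\pi_1,\pi_2}=M_{p,\pi}$ if $\pi_1=p\pi'$, $\pi_2=\pi\pi'$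 for some $p\in\Gamma$, $\pi,\pi'\in\Gamma^*$, and $0$ otherwise. The automaton has states $1,\dots,n$, pushdown alphabet $\Gamma$, such an $M$, $I\in(\mathbb B\langle\Sigma\cup\{\epsilon\}\rangle)^{1\times n}$, $P\in(\mathbb B\langle\Sigma\cup\{\epsilon\}\rangle)^{n\times 1}$, $p_0\in\Gamma$, $l\in\{0,\dots,n\}$. $M^*=\sum_{m\ge0}M^m$ with blocks $(M^* )_{\pi,\pi'}$; with $P_l=\{(j_1,j_2,\dots)\in\{1,\dots,n\}^\omega\mid j_t\le l\text{ for infinitely many }t\}$, $((M^{\omega,l})_\pi)_i=\sum_{\pi_1,\pi_2,\ldots\in\Gamma^*}\sum_{(j_1,j_2,\ldots)\in P_l}(M_{\pi,\pi_1})_{i,j_1}(M_{\pi_1,\pi_2})_{j_1,j_2}\cdots$. The mixed context-free grammar $G_l=(X,Z,\Sigma,P_X,P_Z,x_0,z_0,l)$ has variables $X=\{x_0\}\cup\{[i,p,j]\mid 1\le i,j\le n,\ p\in\Gamma\}$, $Z=\{z_0\}\cup\{[i,p]\mid1\le i\le n,\ p\in\Gamma\}$, and productions: $P_X$: $x_0\to a_1[m_1,p_0,m_2]a_2$ whenever $(I_{m_1},a_1)\ne0$, $(P_{m_2},a_2)\ne0$, $a_1,a_2\in\Sigma\cup\{\epsilon\}$; and $[i,p,j]\to a[m_1,p_1,m_2][m_2,p_2,m_3]\cdots[m_k,p_k,j]$ whenever $k\ge0$, $p_1,\dots,p_k\in\Gamma$, $1\le m_1,\dots,m_k\le n$, $a\in\Sigma\cup\{\epsilon\}$,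 $((M_{p,p_1\dots p_k})_{i,m_1},a)\ne0$ (for $k=0$: $[i,p,j]\to a$ with $((M_{p,\epsilon})_{i,j},a)\ne0$). $P_Z$: $z_0\to a[m,p_0]$ whenever $(I_m,a)\ne0$, $a\in\Sigma\cup\{\epsilon\}$; and $[i,p]\to a[m_1,p_1,m_2]\cdots[m_{j-1},p_{j-1},m_j][m_j,p_j]$ whenever $k\ge1$, $1\le j\le k$, $p_1,\dots,p_k\in\Gamma$, $1\le m_1,\dots,m_j\le n$, $a\in\Sigma\cup\{\epsilon\}$, $((M_{p,p_1\dots p_k})_{i,m_1},a)\ne0$. An infinite derivation of $w\in\Sigma^\omega$ is a sequence $z_0\Rightarrow\alpha_0[i_0,q_0]\Rightarrow_L^*w_0[i_0,q_0]\Rightarrow w_0\alpha_1[i_1,q_1]\Rightarrow_L^*w_0w_1[i_1,q_1]\Rightarrow\cdots$ where $z_0\to\alpha_0[i_0,q_0]$ and $[i_m,q_m]\to\alpha_{m+1}[i_{m+1},q_{m+1}]$ are in $P_Z$, each $\alpha_m\Rightarrow_L^*w_m\in\Sigma^*$ is a finite leftmost derivation with $P_X$, and $w=w_0w_1\cdots$. It is a derivation $z_0\Rightarrow_L^{\omega,l}w$ if, with $i_m^1,\dots,i_m^{t_m}$ the first components of the triple variables rewritten (in order) in $\alpha_m\Rightarrow_L^*w_m$, the sequence $i_0,i_1^1,\dots,i_1^{t_1},i_1,i_2^1,\dots,i_2^{t_2},i_2,\dots$ lies in $P_l$. $L(G_l)=\{w\in\Sigma^*\mid x_0\Rightarrow_L^*w\}\cup\{w\in\Sigma^\omega\mid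 z_0\Rightarrow_L^{\omega,l}w\}$. *)

theory Defs
  imports Main
begin

text \<open>Series in B<<Sigma*>> are identified with languages ('a list set), series in
B<<Sigma^omega>> with sets of infinite words (nat => 'a). A coefficient set in
B<Sigma u {eps}> is a set of 'a option, where None stands for the empty word eps.\<close>

definition sym_lang :: "'a option set \<Rightarrow> 'a list set" where
  "sym_lang S = (\<lambda>x. case x of None \<Rightarrow> [] | Some a \<Rightarrow> [a]) ` S"

definition lconc :: "'a list set \<Rightarrow> 'a list set \<Rightarrow> 'a list set" where
  "lconc A B = {u @ v | u v. u \<in> A \<and> v \<in> B}"

definition fw_conc :: "'a list \<Rightarrow> (nat \<Rightarrow> 'a) \<Rightarrow> (nat \<Rightarrow> 'a)" where
  "fw_conc u w = (\<lambda>k. if k < length u then u ! k else w (k - length u))"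

text \<open>The infinite word w is the concatenation ws 0 ws 1 ws 2 ... (meaningful when
infinitely many ws t are nonempty).\<close>
definition omega_concat :: "(nat \<Rightarrow> 'a list) \<Rightarrow> (nat \<Rightarrow> 'a) \<Rightarrow> bool" where
  "omega_concat ws w \<longleftrightarrow>
     (\<forall>t. map w [0..<length (concat (map ws [0..<t]))] = concat (map ws [0..<t]))"

definition inf_prod :: "(nat \<Rightarrow> 'a list set) \<Rightarrow> (nat \<Rightarrow> 'a) set" where
  "inf_prod L = {w. \<exists>ws. (\<forall>t. ws t \<in> L t) \<and> infinite {t. ws t \<noteq> []} \<and> omega_concat ws w}"

text \<open>Blocks: Mb p \<pi> i j is the (i,j)-entry of the block M_{p,\<pi>}; states are 1..n.\<close>

definition pd_trans_wf :: "nat \<Rightarrow> ('g \<Rightarrow> 'g list \<Rightarrow> nat \<Rightarrow> nat \<Rightarrow> 'a option set) \<Rightarrow> bool" where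
  "pd_trans_wf n Mb \<longleftrightarrow>
     (\<forall>p. finite {\<pi>. \<exists>i\<in>{1..n}. \<exists>j\<in>{1..n}. Mb p \<pi> i j \<noteq> {}})"

text \<open>Matrices indexed by (stack, state) x (stack, state), entries languages.\<close>
type_synonym ('g,'a) lmat = "'g list \<Rightarrow> nat \<Rightarrow> 'g list \<Rightarrow> nat \<Rightarrow> 'a list set"

text \<open>The full pushdown transition matrix M, determined by its blocks via condition (ii).\<close>
definition pd_mat :: "nat \<Rightarrow> ('g \<Rightarrow> 'g list \<Rightarrow> nat \<Rightarrow> nat \<Rightarrow> 'a option set) \<Rightarrow> ('g,'a) lmat" where
  "pd_mat n Mb = (\<lambda>\<pi>1 i \<pi>2 j.
     if i \<in> {1..n} \<and> j \<in> {1..n} then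
       sym_lang (case \<pi>1 of [] \<Rightarrow> {}
                 | p # \<pi>' \<Rightarrow> \<Union>{Mb p \<pi> i j | \<pi>. \<pi>2 = \<pi> @ \<pi>'})
     else {})"

definition mat_mult :: "nat \<Rightarrow> ('g,'a) lmat \<Rightarrow> ('g,'a) lmat \<Rightarrow> ('g,'a) lmat" where
  "mat_mult n A B = (\<lambda>\<pi>1 i \<pi>2 j. \<Union>\<pi>. \<Union>k\<in>{1..n}. lconc (A \<pi>1 i \<pi> k) (B \<pi> k \<pi>2 j))"

definition mat_one :: "nat \<Rightarrow> ('g,'a) lmat" where
  "mat_one n = (\<lambda>\<pi>1 i \<pi>2 j. if \<pi>1 = \<pi>2 \<and> i = j \<and> i \<in> {1..n} then {[]} else {})"

definition mat_star :: "nat \<Rightarrow> ('g,'a) lmat \<Rightarrow> ('g,'a) lmat" where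
  "mat_star n A = (\<lambda>\<pi>1 i \<pi>2 j. \<Union>m. ((mat_mult n A ^^ m) (mat_one n)) \<pi>1 i \<pi>2 j)"

definition Pl :: "nat \<Rightarrow> nat \<Rightarrow> (nat \<Rightarrow> nat) set" where
  "Pl n l = {js. (\<forall>t. js t \<in> {1..n}) \<and> infinite {t. js t \<le> l}}"

definition mat_omega :: "nat \<Rightarrow> nat \<Rightarrow> ('g,'a) lmat \<Rightarrow> 'g list \<Rightarrow> nat \<Rightarrow> (nat \<Rightarrow> 'a) set" where
  "mat_omega n l A \<pi> i = {w. \<exists>\<pi>s js. \<pi>s 0 = \<pi> \<and> js 0 = i \<and> (\<lambda>t. js (Suc t)) \<in> Pl n l \<and>
       w \<in> inf_prod (\<lambda>t. A (\<pi>s t) (js t) (\<pi>s (Suc t)) (js (Suc t)))}"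

text \<open>Behaviour ||P|| = I (M^* )_{p0,eps} P + I (M^{omega,l})_{p0}, as a set of
finite (Inl) and infinite (Inr) words.\<close>
definition pda_behaviour ::
  "nat \<Rightarrow> ('g \<Rightarrow> 'g list \<Rightarrow> nat \<Rightarrow> nat \<Rightarrow> 'a option set) \<Rightarrow> (nat \<Rightarrow> 'a option set) \<Rightarrow>
   (nat \<Rightarrow> 'a option set) \<Rightarrow> 'g \<Rightarrow> nat \<Rightarrow> ('a list + (nat \<Rightarrow> 'a)) set" where
  "pda_behaviour n Mb Iv Pv p0 l =
     Inl ` (\<Union>i\<in>{1..n}. \<Union>j\<in>{1..n}.
              lconc (lconc (sym_lang (Iv i)) (mat_star n (pd_mat n Mb) [p0] i [] j)) (sym_lang (Pv j)))
   \<union> Inr ` (\<Union>i\<in>{1..n}. {fw_conc u w | u w. u \<in> sym_lang (Iv i) \<and>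
                          w \<in> mat_omega n l (pd_mat n Mb) [p0] i})"

datatype ('a,'g) gsym = Tm 'a | X0 | Trip nat 'g nat | Z0 | Zp nat 'g

definition opt_tm :: "'a option \<Rightarrow> ('a,'g) gsym list" where
  "opt_tm x = (case x of None \<Rightarrow> [] | Some a \<Rightarrow> [Tm a])"

fun first_comp :: "('a,'g) gsym \<Rightarrow> nat list" where
  "first_comp (Trip i p j) = [i]"
| "first_comp _ = []"

text \<open>lderiv R \<alpha> is \<gamma>: leftmost derivation \<alpha> =>_L^* \<gamma> using productions R, where is lists
(in order) the first components of the triple variables rewritten.\<close>
inductive lderiv :: "(('a,'g) gsym \<Rightarrow> ('a,'g) gsym list \<Rightarrow> bool) \<Rightarrow>
    ('a,'g) gsym list \<Rightarrow> nat list \<Rightarrow> ('a,'g) gsym list \<Rightarrow> bool" for R where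
  refl: "lderiv R \<alpha> [] \<alpha>"
| step: "R A rhs \<Longrightarrow> set u \<subseteq> range Tm \<Longrightarrow> lderiv R (u @ rhs @ \<beta>) is \<gamma> \<Longrightarrow>
         lderiv R (u @ A # \<beta>) (first_comp A @ is) \<gamma>"

definition mcfg_lang ::
  "(('a,'g) gsym \<Rightarrow> ('a,'g) gsym list \<Rightarrow> bool) \<Rightarrow> (('a,'g) gsym \<Rightarrow> ('a,'g) gsym list \<Rightarrow> bool) \<Rightarrow>
   nat \<Rightarrow> nat \<Rightarrow> ('a list + (nat \<Rightarrow> 'a)) set" where
  "mcfg_lang RX RZ n l =
     Inl ` {w. \<exists>is. lderiv RX [X0] is (map Tm w)}
   \<union> Inr ` {w. \<exists>\<alpha> iz q ws is.
        RZ Z0 (\<alpha> 0 @ [Zp (iz 0) (q 0)]) \<and>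
        (\<forall>m. RZ (Zp (iz m) (q m)) (\<alpha> (Suc m) @ [Zp (iz (Suc m)) (q (Suc m))])) \<and>
        (\<forall>m. lderiv RX (\<alpha> m) (is m) (map Tm (ws m))) \<and>
        infinite {m. ws m \<noteq> []} \<and> omega_concat ws w \<and>
        (\<exists>js. omega_concat (\<lambda>m. case m of 0 \<Rightarrow> [iz 0] | Suc k \<Rightarrow> is (Suc k) @ [iz (Suc k)]) js
              \<and> js \<in> Pl n l)}"

definition GX :: "nat \<Rightarrow> ('g \<Rightarrow> 'g list \<Rightarrow> nat \<Rightarrow> nat \<Rightarrow> 'a option set) \<Rightarrow> (nat \<Rightarrow> 'a option set) \<Rightarrow>
   (nat \<Rightarrow> 'a option set) \<Rightarrow> 'g \<Rightarrow> ('a,'g) gsym \<Rightarrow> ('a,'g) gsym list \<Rightarrow> bool" where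
  "GX n Mb Iv Pv p0 A rhs \<longleftrightarrow>
     (A = X0 \<and> (\<exists>a1 a2 m1 m2. m1 \<in> {1..n} \<and> m2 \<in> {1..n} \<and> a1 \<in> Iv m1 \<and> a2 \<in> Pv m2 \<and>
                 rhs = opt_tm a1 @ [Trip m1 p0 m2] @ opt_tm a2))
   \<or> (\<exists>i p j ps ms a. A = Trip i p j \<and> i \<in> {1..n} \<and> j \<in> {1..n} \<and>
        length ms = length ps \<and> set ms \<subseteq> {1..n} \<and> a \<in> Mb p ps i (hd (ms @ [j])) \<and>
        rhs = opt_tm a @ map (\<lambda>t. Trip ((ms @ [j]) ! t) (ps ! t) ((ms @ [j]) ! Suc t)) [0..<length ps])"

definition GZ :: "nat \<Rightarrow> ('g \<Rightarrow> 'g list \<Rightarrow> nat \<Rightarrow> nat \<Rightarrow> 'a option set) \<Rightarrow> (nat \<Rightarrow> 'a option set) \<Rightarrow>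
   'g \<Rightarrow> ('a,'g) gsym \<Rightarrow> ('a,'g) gsym list \<Rightarrow> bool" where
  "GZ n Mb Iv p0 A rhs \<longleftrightarrow>
     (A = Z0 \<and> (\<exists>a m. m \<in> {1..n} \<and> a \<in> Iv m \<and> rhs = opt_tm a @ [Zp m p0]))
   \<or> (\<exists>i p ps ms jj a. A = Zp i p \<and> i \<in> {1..n} \<and> 1 \<le> jj \<and> jj \<le> length ps \<and>
        length ms = jj \<and> set ms \<subseteq> {1..n} \<and> a \<in> Mb p ps i (ms ! 0) \<and>
        rhs = opt_tm a @ map (\<lambda>t. Trip (ms ! t) (ps ! t) (ms ! Suc t)) [0..<jj - 1]
              @ [Zp (ms ! (jj - 1)) (ps ! (jj - 1))])"

end

theory Submission
  imports Defs "HOL-Library.Infinite_Set" "HOL-Library.Nat_Bijection"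
begin

text \<open>
  The triple variable \<open>[i,p,j]\<close> derives exactly the words the automaton reads while it
  removes \<open>p\<close> from the top of its stack, starting in state \<open>i\<close> and ending in state \<open>j\<close>; hence
  a chain \<open>[i,p\<^sub>1,m\<^sub>1]\<dots>[m\<^sub>k\<^sub>-\<^sub>1,p\<^sub>k,j]\<close> derives the words read while emptying the stack
  \<open>p\<^sub>1\<dots>p\<^sub>k\<close>, and the leftmost derivation lists the states in which the moves start.

  A derivation with \<open>P\<^sub>Z\<close> follows one infinite run: a step \<open>[i,p] \<rightarrow> a [\<dots>]\<dots>[m\<^sub>j,p\<^sub>j]\<close>
  together with the derivations of its triple variables is a finite run that leaves
  \<open>p\<^sub>j\<close> on top of the stack. Conversely, an infinite run is cut at the positions where the
  stack height is minimal for the rest of the run; between two such cuts the run performs one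
  move and then pops, by triple-derivations, everything it pushed above the next cut. In both
  directions the states recorded by the derivation are the states of the run, so the acceptance
  condition \<open>P\<^sub>l\<close> is the same on both sides.
\<close>

section \<open>Finite runs of the automaton\<close>

definition opt_word :: "'a option \<Rightarrow> 'a list" where
  "opt_word x = (case x of None \<Rightarrow> [] | Some a \<Rightarrow> [a])"

lemma sym_lang_eq_image: "sym_lang S = opt_word ` S"
  unfolding sym_lang_def opt_word_def by simp

lemma opt_tm_eq_map: "opt_tm x = map Tm (opt_word x)"
  by (cases x) (simp_all add: opt_tm_def opt_word_def)

lemma mem_pd_mat_iff:
  "x \<in> pd_mat n Mb \<pi>1 i \<pi>2 j \<longleftrightarrow> i \<in> {1..n} \<and> j \<in> {1..n} \<and>
     (\<exists>p \<pi> ps a. \<pi>1 = p # \<pi> \<and> \<pi>2 = ps @ \<pi> \<and> a \<in> Mb p ps i j \<and> x = opt_word a)"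
  unfolding pd_mat_def sym_lang_eq_image by (cases \<pi>1) auto

text \<open>\<open>pd_run n Mb \<pi> i w ss \<pi>' j\<close>: the automaton moves from stack \<open>\<pi>\<close> in state \<open>i\<close> to
  stack \<open>\<pi>'\<close> in state \<open>j\<close> reading \<open>w\<close>; \<open>ss\<close> lists the states in which the moves start,
  which are the first components recorded by leftmost derivations of \<open>G\<^sub>l\<close>.\<close>
inductive pd_run :: "nat \<Rightarrow> ('g \<Rightarrow> 'g list \<Rightarrow> nat \<Rightarrow> nat \<Rightarrow> 'a option set) \<Rightarrow>
    'g list \<Rightarrow> nat \<Rightarrow> 'a list \<Rightarrow> nat list \<Rightarrow> 'g list \<Rightarrow> nat \<Rightarrow> bool"
  for n Mb where
  run_idle: "i \<in> {1..n} \<Longrightarrow> pd_run n Mb \<pi> i [] [] \<pi> i"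
| run_move: "a \<in> Mb p ps i k \<Longrightarrow> i \<in> {1..n} \<Longrightarrow> k \<in> {1..n} \<Longrightarrow>
    pd_run n Mb (ps @ \<pi>) k w ss \<pi>' j \<Longrightarrow> pd_run n Mb (p # \<pi>) i (opt_word a @ w) (i # ss) \<pi>' j"

lemma pd_run_Nil_iff: "pd_run n Mb \<pi> i w [] \<pi>' j \<longleftrightarrow> \<pi> = \<pi>' \<and> i = j \<and> i \<in> {1..n} \<and> w = []"
  by (auto elim: pd_run.cases intro: pd_run.intros)

lemma pd_run_Cons_iff:
  "pd_run n Mb \<pi>1 i w (s # ss) \<pi>2 j \<longleftrightarrow>
     (\<exists>p \<pi> ps a k w'. \<pi>1 = p # \<pi> \<and> s = i \<and> a \<in> Mb p ps i k \<and> i \<in> {1..n} \<and> k \<in> {1..n} \<and>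
        pd_run n Mb (ps @ \<pi>) k w' ss \<pi>2 j \<and> w = opt_word a @ w')"
  by (blast elim: pd_run.cases intro: pd_run.intros)

lemma pd_run_append_stack:
  "pd_run n Mb \<pi> i w ss \<pi>' j \<Longrightarrow> pd_run n Mb (\<pi> @ \<delta>) i w ss (\<pi>' @ \<delta>) j"
  by (induction rule: pd_run.induct) (auto intro: pd_run.intros)

lemma mem_mat_pow_iff_pd_run:
  "w \<in> ((mat_mult n (pd_mat n Mb) ^^ m) (mat_one n)) \<pi>1 i \<pi>2 j \<longleftrightarrow>
     (\<exists>ss. length ss = m \<and> pd_run n Mb \<pi>1 i w ss \<pi>2 j)"
proof (induction m arbitrary: \<pi>1 i w)
  case 0
  show ?case by (auto simp: mat_one_def pd_run_Nil_iff)
next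
  case (Suc m)
  have "w \<in> ((mat_mult n (pd_mat n Mb) ^^ Suc m) (mat_one n)) \<pi>1 i \<pi>2 j \<longleftrightarrow>
    (\<exists>\<pi>. \<exists>k\<in>{1..n}. \<exists>u v. w = u @ v \<and> u \<in> pd_mat n Mb \<pi>1 i \<pi> k \<and>
       (\<exists>ss. length ss = m \<and> pd_run n Mb \<pi> k v ss \<pi>2 j))"
    by (simp add: mat_mult_def lconc_def Suc.IH)
  also have "\<dots> \<longleftrightarrow> (\<exists>s ss. length ss = m \<and> pd_run n Mb \<pi>1 i w (s # ss) \<pi>2 j)"
    unfolding mem_pd_mat_iff pd_run_Cons_iff by blast
  also have "\<dots> \<longleftrightarrow> (\<exists>ss. length ss = Suc m \<and> pd_run n Mb \<pi>1 i w ss \<pi>2 j)"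
    by (metis length_Suc_conv)
  finally show ?case .
qed

lemma mem_mat_star_iff_pd_run:
  "w \<in> mat_star n (pd_mat n Mb) \<pi>1 i \<pi>2 j \<longleftrightarrow> (\<exists>ss. pd_run n Mb \<pi>1 i w ss \<pi>2 j)"
  unfolding mat_star_def using mem_mat_pow_iff_pd_run by blast

section \<open>Chains of triple variables and leftmost derivations\<close>

inductive trip_chain :: "nat \<Rightarrow> nat \<Rightarrow> 'g list \<Rightarrow> nat \<Rightarrow> ('a,'g) gsym list \<Rightarrow> bool" for n where
  chain_nil: "i \<in> {1..n} \<Longrightarrow> trip_chain n i [] i []"
| chain_cons: "trip_chain n m \<gamma> j xs \<Longrightarrow> i \<in> {1..n} \<Longrightarrow> trip_chain n i (p # \<gamma>) j (Trip i p m # xs)"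

lemma trip_chain_states: "trip_chain n i \<gamma> j xs \<Longrightarrow> i \<in> {1..n} \<and> j \<in> {1..n}"
  by (induction rule: trip_chain.induct) auto

lemma trip_chain_single: "trip_chain n i [p] j xs \<Longrightarrow> xs = [Trip i p j]"
  by (auto elim!: trip_chain.cases)

lemma trip_chain_append:
  "trip_chain n i \<gamma>1 m xs1 \<Longrightarrow> trip_chain n m \<gamma>2 j xs2 \<Longrightarrow> trip_chain n i (\<gamma>1 @ \<gamma>2) j (xs1 @ xs2)"
  by (induction rule: trip_chain.induct) (auto intro: trip_chain.intros)

lemma trip_chain_appendE:
  assumes "trip_chain n i (\<gamma>1 @ \<gamma>2) j xs"
  obtains m xs1 xs2 where "xs = xs1 @ xs2" "trip_chain n i \<gamma>1 m xs1" "trip_chain n m \<gamma>2 j xs2"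
  using assms
proof (induction \<gamma>1 arbitrary: i xs thesis)
  case Nil
  then show ?case using trip_chain_states by (metis append_Nil chain_nil)
next
  case (Cons p \<gamma>1)
  from Cons.prems(2) obtain m xs' where
    "xs = Trip i p m # xs'" "trip_chain n m (\<gamma>1 @ \<gamma>2) j xs'" "i \<in> {1..n}"
    by (auto elim: trip_chain.cases)
  with Cons.IH show ?case by (metis Cons.prems(1) append_Cons chain_cons)
qed

text \<open>The right-hand sides of \<open>G\<^sub>l\<close> write chains with an explicit list \<open>L\<close> of states.\<close>
lemma trip_chain_map:
  assumes "length L = Suc k" "k \<le> length ps" "set L \<subseteq> {1..n}"
  shows "trip_chain n (L ! 0) (take k ps) (L ! k) (map (\<lambda>t. Trip (L!t) (ps!t) (L!Suc t)) [0..<k])"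
  using assms
proof (induction k arbitrary: L ps)
  case 0
  then show ?case by (cases L) (auto intro: trip_chain.intros)
next
  case (Suc k)
  then obtain x L' p ps' where "L = x # L'" "ps = p # ps'"
    by (cases L; cases ps) auto
  with Suc show ?case
    by (auto simp: map_upt_Suc simp del: upt_Suc intro!: chain_cons)
qed

lemma trip_chain_imp_map:
  "trip_chain n i \<gamma> j xs \<Longrightarrow> \<exists>L. length L = Suc (length \<gamma>) \<and> L ! 0 = i \<and> L ! length \<gamma> = j \<and>
     set L \<subseteq> {1..n} \<and> xs = map (\<lambda>t. Trip (L!t) (\<gamma>!t) (L!Suc t)) [0..<length \<gamma>]"
proof (induction rule: trip_chain.induct)
  case (chain_nil i)
  then show ?case by (intro exI[of _ "[i]"]) auto
next
  case (chain_cons m \<gamma> j xs i p)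
  then obtain L where "length L = Suc (length \<gamma>)" "L ! 0 = m" "L ! length \<gamma> = j"
    "set L \<subseteq> {1..n}" "xs = map (\<lambda>t. Trip (L!t) (\<gamma>!t) (L!Suc t)) [0..<length \<gamma>]"
    by blast
  with chain_cons.hyps show ?case
    by (intro exI[of _ "i # L"]) (auto simp: map_upt_Suc simp del: upt_Suc)
qed

lemma lderiv_prepend_terminals:
  "lderiv R \<beta> is \<gamma> \<Longrightarrow> lderiv R (map Tm v @ \<beta>) is (map Tm v @ \<gamma>)"
proof (induction rule: lderiv.induct)
  case (refl \<alpha>)
  show ?case by (rule lderiv.refl)
next
  case (step A rhs u \<beta> "is" \<gamma>)
  have "lderiv R ((map Tm v @ u) @ A # \<beta>) (first_comp A @ is) (map Tm v @ \<gamma>)"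
    by (rule lderiv.step) (use step in auto)
  then show ?case by simp
qed

lemma lderiv_append: "lderiv R \<beta> is \<gamma> \<Longrightarrow> lderiv R (\<beta> @ \<delta>) is (\<gamma> @ \<delta>)"
proof (induction rule: lderiv.induct)
  case (refl \<alpha>)
  show ?case by (rule lderiv.refl)
next
  case (step A rhs u \<beta> "is" \<gamma>)
  have "lderiv R (u @ A # (\<beta> @ \<delta>)) (first_comp A @ is) (\<gamma> @ \<delta>)"
    by (rule lderiv.step) (use step in auto)
  then show ?case by simp
qed

lemma leftmost_nonterminal_eq:
  assumes "u @ A # \<beta> = map Tm v @ B # \<gamma>" "set u \<subseteq> range Tm" "A \<notin> range Tm" "B \<notin> range Tm"
  shows "u = map Tm v \<and> A = B \<and> \<beta> = \<gamma>"
  using assms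
proof (induction u arbitrary: v)
  case Nil
  then show ?case by (cases v) auto
next
  case (Cons x u)
  show ?case
  proof (cases v)
    case Nil
    then show ?thesis using Cons.prems by auto
  next
    case (Cons y v')
    then show ?thesis using Cons.prems Cons.IH[of v'] by simp
  qed
qed

lemma GX_lhs_not_terminal: "GX n Mb Iv Pv p0 A rhs \<Longrightarrow> A \<notin> range Tm"
  unfolding GX_def by auto

lemma GX_TripE:
  assumes "GX n Mb Iv Pv p0 (Trip i p j) rhs"
  obtains ps L a where "i \<in> {1..n}" "length L = Suc (length ps)" "set L \<subseteq> {1..n}"
    "L ! length ps = j" "a \<in> Mb p ps i (L ! 0)"
    "rhs = opt_tm a @ map (\<lambda>t. Trip (L ! t) (ps ! t) (L ! Suc t)) [0..<length ps]"
proof -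
  from assms obtain ps ms a where "i \<in> {1..n}" "j \<in> {1..n}" "length ms = length ps"
    "set ms \<subseteq> {1..n}" "a \<in> Mb p ps i (hd (ms @ [j]))"
    "rhs = opt_tm a @ map (\<lambda>t. Trip ((ms @ [j]) ! t) (ps ! t) ((ms @ [j]) ! Suc t)) [0..<length ps]"
    unfolding GX_def by auto
  with that[of "ms @ [j]"] show thesis by (simp add: hd_conv_nth nth_append)
qed

lemma GX_TripI:
  assumes "i \<in> {1..n}" "length L = Suc (length ps)" "set L \<subseteq> {1..n}" "a \<in> Mb p ps i (L ! 0)"
  shows "GX n Mb Iv Pv p0 (Trip i p (L ! length ps))
           (opt_tm a @ map (\<lambda>t. Trip (L ! t) (ps ! t) (L ! Suc t)) [0..<length ps])"
proof -
  define ms where "ms = butlast L"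
  define j where "j = L ! length ps"
  have L: "ms @ [j] = L"
    using assms(2) unfolding ms_def j_def
    by (metis append_butlast_last_id diff_Suc_1 last_conv_nth list.size(3) nat.distinct(1))
  have "length ms = length ps" "set ms \<subseteq> {1..n}"
    using assms(2,3) in_set_butlastD[of _ L] unfolding ms_def by auto
  moreover have "j \<in> {1..n}"
    using assms(2,3) nth_mem[of "length ps" L] unfolding j_def by (simp add: subset_iff)
  moreover have "a \<in> Mb p ps i (hd (ms @ [j]))" using assms(2,4) L by (cases L) auto
  ultimately have "GX n Mb Iv Pv p0 (Trip i p j)
      (opt_tm a @ map (\<lambda>t. Trip ((ms @ [j]) ! t) (ps ! t) ((ms @ [j]) ! Suc t)) [0..<length ps])"
    unfolding GX_def using assms(1) by blast
  then show ?thesis by (simp only: L flip: j_def)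
qed

lemma lderiv_trip_chain_imp_pd_run:
  fixes \<beta> :: "('a,'g) gsym list"
  assumes "lderiv (GX n Mb Iv Pv p0) \<beta> is \<gamma>" "\<gamma> = map Tm w" "\<beta> = map Tm u @ xs @ map Tm v"
    "trip_chain n i gs j xs"
  shows "\<exists>w'. w = u @ w' @ v \<and> pd_run n Mb gs i w' is [] j"
  using assms
proof (induction arbitrary: u xs i gs rule: lderiv.induct)
  case (refl \<alpha>)
  have "xs = []"
  proof (rule ccontr)
    assume "xs \<noteq> []"
    with refl.prems(3) obtain i' p m xs' where "xs = Trip i' p m # xs'"
      by (auto elim: trip_chain.cases)
    then have "Trip i' p m \<in> set \<alpha>" using refl.prems(2) by simp
    then show False using refl.prems(1) by auto
  qed
  with refl.prems(3) have "gs = [] \<and> i = j \<and> i \<in> {1..n}"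
    by (auto elim: trip_chain.cases)
  moreover have "map Tm w = (map Tm (u @ v) :: ('a,'g) gsym list)"
    using refl.prems \<open>xs = []\<close> by simp
  then have "w = u @ v" by (rule map_injective) (simp add: inj_def)
  ultimately show ?case by (auto intro: run_idle)
next
  case (step A rhs u0 \<beta> iss \<gamma>)
  have A_not_Tm: "A \<notin> range Tm" using GX_lhs_not_terminal[OF step.hyps(1)] .
  have "xs \<noteq> []"
  proof
    assume "xs = []"
    have "A \<in> set (u0 @ A # \<beta>)" by simp
    also have "\<dots> = set (map Tm u @ xs @ map Tm v)" using step.prems(2) by simp
    finally show False using A_not_Tm \<open>xs = []\<close> by auto
  qed
  with step.prems(3) obtain p gs' m xs' where chain: "xs = Trip i p m # xs'" "gs = p # gs'"
    "trip_chain n m gs' j xs'" "i \<in> {1..n}"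
    by (auto elim: trip_chain.cases)
  have "u0 = map Tm u \<and> A = Trip i p m \<and> \<beta> = xs' @ map Tm v"
    by (rule leftmost_nonterminal_eq) (use step.prems(2) step.hyps(2) chain A_not_Tm in auto)
  with step.hyps(1) have u0: "u0 = map Tm u" and \<beta>: "\<beta> = xs' @ map Tm v" and "A = Trip i p m"
    and production: "GX n Mb Iv Pv p0 (Trip i p m) rhs" by auto
  from production obtain ps L a where "i \<in> {1..n}" and L: "length L = Suc (length ps)"
    "set L \<subseteq> {1..n}" "L ! length ps = m" "a \<in> Mb p ps i (L ! 0)"
    and rhs: "rhs = opt_tm a @ map (\<lambda>t. Trip (L ! t) (ps ! t) (L ! Suc t)) [0..<length ps]"
    by (rule GX_TripE)
  define ys :: "('a,'g) gsym list" where "ys = map (\<lambda>t. Trip (L ! t) (ps ! t) (L ! Suc t)) [0..<length ps]"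
  have "trip_chain n (L ! 0) ps m ys"
    using trip_chain_map[of L "length ps" ps n] L unfolding ys_def by simp
  then have chain': "trip_chain n (L ! 0) (ps @ gs') j (ys @ xs')"
    using chain(3) by (rule trip_chain_append)
  have "u0 @ rhs @ \<beta> = map Tm (u @ opt_word a) @ (ys @ xs') @ map Tm v"
    using u0 \<beta> rhs by (simp add: ys_def opt_tm_eq_map)
  from step.IH[OF step.prems(1) this chain'] obtain w' where
    w': "w = (u @ opt_word a) @ w' @ v" "pd_run n Mb (ps @ gs') (L ! 0) w' iss [] j"
    by blast
  have "pd_run n Mb (p # gs') i (opt_word a @ w') (i # iss) [] j"
    using L(4) chain(4) _ w'(2) by (rule run_move) (use trip_chain_states[OF chain'] in blast)
  then show ?case using w' chain \<open>A = Trip i p m\<close> by auto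
qed

lemma pd_run_imp_lderiv_trip_chain:
  fixes Mb :: "'g \<Rightarrow> 'g list \<Rightarrow> nat \<Rightarrow> nat \<Rightarrow> 'a option set"
  assumes "pd_run n Mb \<gamma> i w ss [] j"
  shows "\<exists>xs. trip_chain n i \<gamma> j xs \<and> lderiv (GX n Mb Iv Pv p0) xs ss (map Tm w)"
  using assms
proof (induction \<gamma> i w ss "[] :: 'g list" j rule: pd_run.induct)
  case (run_idle i)
  then show ?case by (intro exI[of _ "[]"]) (auto intro: chain_nil lderiv.refl)
next
  case (run_move a p ps i k \<pi> w ss j)
  then obtain xs where xs: "trip_chain n k (ps @ \<pi>) j xs"
    "lderiv (GX n Mb Iv Pv p0) xs ss (map Tm w)"
    by blast
  from xs(1) obtain m xs1 xs2 where
    split: "xs = xs1 @ xs2" "trip_chain n k ps m xs1" "trip_chain n m \<pi> j xs2"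
    by (rule trip_chain_appendE)
  from trip_chain_imp_map[OF split(2)] obtain L where L: "length L = Suc (length ps)" "L ! 0 = k"
    "L ! length ps = m" "set L \<subseteq> {1..n}"
    "xs1 = map (\<lambda>t. Trip (L!t) (ps!t) (L!Suc t)) [0..<length ps]"
    by blast
  have "GX n Mb Iv Pv p0 (Trip i p (L ! length ps))
      (opt_tm a @ map (\<lambda>t. Trip (L ! t) (ps ! t) (L ! Suc t)) [0..<length ps])"
    by (rule GX_TripI) (use run_move.hyps(1,2) L(1,2,4) in simp_all)
  then have production: "GX n Mb Iv Pv p0 (Trip i p m) (opt_tm a @ xs1)"
    unfolding L(3,5) .
  have "lderiv (GX n Mb Iv Pv p0) ([] @ (opt_tm a @ xs1) @ xs2) ss (map Tm (opt_word a @ w))"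
    using lderiv_prepend_terminals[OF xs(2), of "opt_word a"] split(1) by (simp add: opt_tm_eq_map)
  from lderiv.step[OF production _ this]
  have "lderiv (GX n Mb Iv Pv p0) (Trip i p m # xs2) (i # ss) (map Tm (opt_word a @ w))"
    by simp
  moreover have "trip_chain n i (p # \<pi>) j (Trip i p m # xs2)"
    using split(3) run_move.hyps(2) by (rule chain_cons)
  ultimately show ?case by blast
qed

section \<open>Finite words\<close>

lemma lderiv_X0E:
  assumes "lderiv (GX n Mb Iv Pv p0) [X0] is (map Tm w)"
  obtains i j a1 a2 w' where "i \<in> {1..n}" "j \<in> {1..n}" "a1 \<in> Iv i" "a2 \<in> Pv j"
    "pd_run n Mb [p0] i w' is [] j" "w = opt_word a1 @ w' @ opt_word a2"
  using assms
proof (cases rule: lderiv.cases)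
  case refl
  then show ?thesis by (cases w) auto
next
  case (step A rhs u \<beta> is')
  have "u = [] \<and> A = X0 \<and> \<beta> = []" using step(1) by (cases u) auto
  with step have "GX n Mb Iv Pv p0 X0 rhs" and derivation: "lderiv (GX n Mb Iv Pv p0) rhs is (map Tm w)"
    by auto
  then obtain a1 a2 i j where ij: "i \<in> {1..n}" "j \<in> {1..n}" "a1 \<in> Iv i" "a2 \<in> Pv j"
    and "rhs = opt_tm a1 @ [Trip i p0 j] @ opt_tm a2"
    unfolding GX_def by blast
  with derivation have "lderiv (GX n Mb Iv Pv p0) (map Tm (opt_word a1) @ [Trip i p0 j] @
      map Tm (opt_word a2)) is (map Tm w)"
    by (simp add: opt_tm_eq_map)
  moreover have "trip_chain n i [p0] j [Trip i p0 j]" using ij by (auto intro!: trip_chain.intros)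
  ultimately obtain w' where "w = opt_word a1 @ w' @ opt_word a2" "pd_run n Mb [p0] i w' is [] j"
    using lderiv_trip_chain_imp_pd_run[OF _ HOL.refl HOL.refl] by metis
  with ij that show ?thesis by blast
qed

lemma lderiv_X0I:
  assumes "i \<in> {1..n}" "j \<in> {1..n}" "a1 \<in> Iv i" "a2 \<in> Pv j" "pd_run n Mb [p0] i w ss [] j"
  shows "lderiv (GX n Mb Iv Pv p0) [X0] ss (map Tm (opt_word a1 @ w @ opt_word a2))"
proof -
  obtain xs where chain: "trip_chain n i [p0] j xs" and derivation: "lderiv (GX n Mb Iv Pv p0) xs ss (map Tm w)"
    using pd_run_imp_lderiv_trip_chain[OF assms(5)] by blast
  from chain have "xs = [Trip i p0 j]" by (rule trip_chain_single)
  with derivation have "lderiv (GX n Mb Iv Pv p0) [Trip i p0 j] ss (map Tm w)" by simp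
  from lderiv_append[OF lderiv_prepend_terminals[OF this, of "opt_word a1"], of "map Tm (opt_word a2)"]
  have "lderiv (GX n Mb Iv Pv p0) ([] @ (opt_tm a1 @ [Trip i p0 j] @ opt_tm a2) @ []) ss
      (map Tm (opt_word a1 @ w @ opt_word a2))"
    by (simp add: opt_tm_eq_map)
  moreover have "GX n Mb Iv Pv p0 X0 (opt_tm a1 @ [Trip i p0 j] @ opt_tm a2)"
    unfolding GX_def by (rule disjI1) (use assms in blast)
  ultimately show ?thesis using lderiv.step[of "GX n Mb Iv Pv p0" X0 _ "[]" "[]"] by simp
qed

lemma lderiv_X0_words_eq:
  "{w. \<exists>is. lderiv (GX n Mb Iv Pv p0) [X0] is (map Tm w)} =
   (\<Union>i\<in>{1..n}. \<Union>j\<in>{1..n}.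
      lconc (lconc (sym_lang (Iv i)) (mat_star n (pd_mat n Mb) [p0] i [] j)) (sym_lang (Pv j)))"
  (is "?L = ?R")
proof
  show "?L \<subseteq> ?R"
  proof
    fix w assume "w \<in> ?L"
    then obtain "is" where "lderiv (GX n Mb Iv Pv p0) [X0] is (map Tm w)" by blast
    then obtain i j a1 a2 w' where ij: "i \<in> {1..n}" "j \<in> {1..n}" and a: "a1 \<in> Iv i" "a2 \<in> Pv j"
      and run: "pd_run n Mb [p0] i w' is [] j" and w: "w = opt_word a1 @ w' @ opt_word a2"
      by (rule lderiv_X0E)
    have "opt_word a1 @ w' \<in> lconc (sym_lang (Iv i)) (mat_star n (pd_mat n Mb) [p0] i [] j)"
      using a run unfolding lconc_def sym_lang_eq_image mem_mat_star_iff_pd_run by blast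
    then have "(opt_word a1 @ w') @ opt_word a2 \<in>
        lconc (lconc (sym_lang (Iv i)) (mat_star n (pd_mat n Mb) [p0] i [] j)) (sym_lang (Pv j))"
      using a unfolding lconc_def sym_lang_eq_image by blast
    then show "w \<in> ?R" using ij unfolding w append_assoc by blast
  qed
next
  show "?R \<subseteq> ?L"
  proof
    fix w assume "w \<in> ?R"
    then obtain i j a1 a2 w' ss where "i \<in> {1..n}" "j \<in> {1..n}" "a1 \<in> Iv i" "a2 \<in> Pv j"
      "pd_run n Mb [p0] i w' ss [] j" and w: "w = opt_word a1 @ w' @ opt_word a2"
      unfolding lconc_def sym_lang_eq_image mem_mat_star_iff_pd_run by fastforce
    then have "lderiv (GX n Mb Iv Pv p0) [X0] ss (map Tm w)" by (simp only: w lderiv_X0I)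
    then show "w \<in> ?L" by blast
  qed
qed

section \<open>Regrouping infinite concatenations\<close>

lemma concat_map_upt_split:
  "t \<le> t' \<Longrightarrow> concat (map ws [0..<t']) = concat (map ws [0..<t]) @ concat (map ws [t..<t'])"
  by (metis concat_append le_add_diff_inverse map_append upt_add_eq_append zero_le)

lemma omega_concat_if_cofinal:
  assumes "\<And>t. \<exists>t'\<ge>t. map w [0..<length (concat (map ws [0..<t']))] = concat (map ws [0..<t'])"
  shows "omega_concat ws w"
  unfolding omega_concat_def
proof
  fix t
  obtain t' where "t' \<ge> t" and t': "map w [0..<length (concat (map ws [0..<t']))] = concat (map ws [0..<t'])"
    using assms by blast
  define P where "P = concat (map ws [0..<t])"
  define Q where "Q = concat (map ws [t..<t'])"
  have "concat (map ws [0..<t']) = P @ Q"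
    unfolding P_def Q_def using concat_map_upt_split[OF \<open>t' \<ge> t\<close>] .
  with t' have "take (length P) (map w [0..<length P + length Q]) = P" by simp
  then show "map w [0..<length (concat (map ws [0..<t]))] = concat (map ws [0..<t])"
    unfolding P_def by (simp add: take_map)
qed

lemma fw_conc_map_upt: "map (fw_conc u w) [0..<length u + k] = u @ map w [0..<k]"
  by (rule nth_equalityI) (auto simp: fw_conc_def nth_append)

lemma omega_concat_eq_fw_conc: "omega_concat V W \<Longrightarrow> W = fw_conc (V 0) (\<lambda>k. W (k + length (V 0)))"
proof
  fix k
  assume "omega_concat V W"
  then have "map W [0..<length (concat (map V [0..<1]))] = concat (map V [0..<1])"
    unfolding omega_concat_def by blast
  then have "map W [0..<length (V 0)] = V 0" by simp
  then show "W k = fw_conc (V 0) (\<lambda>k. W (k + length (V 0))) k"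
    by (cases "k < length (V 0)") (auto simp: fw_conc_def dest: arg_cong[where f = "\<lambda>xs. xs ! k"])
qed

lemma Pl_Suc_iff: "js 0 \<in> {1..n} \<Longrightarrow> js \<in> Pl n l \<longleftrightarrow> (\<lambda>t. js (Suc t)) \<in> Pl n l"
proof -
  assume "js 0 \<in> {1..n}"
  then have "(\<forall>t. js t \<in> {1..n}) \<longleftrightarrow> (\<forall>t. js (Suc t) \<in> {1..n})"
    by (metis not0_implies_Suc)
  moreover have "{t. js (Suc t) \<le> l} = Suc -` {t. js t \<le> l}" by auto
  then have "infinite {t. js (Suc t) \<le> l} \<longleftrightarrow> infinite {t. js t \<le> l}"
    by (simp only: finite_vimage_Suc_iff)
  ultimately show ?thesis unfolding Pl_def by blast
qed

text \<open>Throughout, \<open>B\<close> cuts \<open>\<nat>\<close> into the consecutive blocks \<open>[B m, B (Suc m))\<close>.\<close>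
context
  fixes B :: "nat \<Rightarrow> nat"
  assumes strict_mono_B: "strict_mono B" and B_0: "B 0 = 0"
begin

lemma le_block_start: "m \<le> B m"
  using strict_mono_B by (rule strict_mono_imp_increasing)

lemma block_start_less: "B m < B (Suc m)"
  using strict_mono_B by (simp add: strict_mono_Suc_iff)

lemma block_containing:
  obtains m where "B m \<le> t" "t < B (Suc m)"
proof (induction t arbitrary: thesis)
  case 0
  then show ?case using B_0 block_start_less[of 0] by simp
next
  case (Suc t)
  then obtain m where m: "B m \<le> t" "t < B (Suc m)" by blast
  show ?case
  proof (cases "Suc t < B (Suc m)")
    case True
    then show ?thesis using m Suc.prems by (meson le_SucI)
  next
    case False
    then have "Suc t = B (Suc m)" using m by simp
    then show ?thesis using Suc.prems[of "Suc m"] block_start_less[of "Suc m"] by simp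
  qed
qed

context
  fixes V X :: "nat \<Rightarrow> 'a list"
  assumes V_Suc: "\<And>m. V (Suc m) = concat (map X [B m..<B (Suc m)])"
begin

lemma concat_blocks: "concat (map V [0..<Suc m]) = V 0 @ concat (map X [0..<B m])"
proof (induction m)
  case 0
  then show ?case using B_0 by simp
next
  case (Suc m)
  have "B m \<le> B (Suc m)" using strict_mono_B by (simp add: strict_mono_less_eq)
  with Suc show ?case using V_Suc concat_map_upt_split[of "B m" "B (Suc m)" X] by simp
qed

lemma omega_concat_blocks_iff: "omega_concat V (fw_conc (V 0) w) \<longleftrightarrow> omega_concat X w"
proof
  assume V: "omega_concat V (fw_conc (V 0) w)"
  show "omega_concat X w"
  proof (rule omega_concat_if_cofinal)
    fix t
    have "map (fw_conc (V 0) w) [0..<length (concat (map V [0..<Suc t]))] = concat (map V [0..<Suc t])"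
      using V unfolding omega_concat_def by blast
    then have "map w [0..<length (concat (map X [0..<B t]))] = concat (map X [0..<B t])"
      unfolding concat_blocks length_append fw_conc_map_upt by simp
    then show "\<exists>t'\<ge>t. map w [0..<length (concat (map X [0..<t']))] = concat (map X [0..<t'])"
      using le_block_start by blast
  qed
next
  assume X: "omega_concat X w"
  show "omega_concat V (fw_conc (V 0) w)"
  proof (rule omega_concat_if_cofinal)
    fix t
    have "map w [0..<length (concat (map X [0..<B t]))] = concat (map X [0..<B t])"
      using X unfolding omega_concat_def by blast
    then have "map (fw_conc (V 0) w) [0..<length (concat (map V [0..<Suc t]))] =
        concat (map V [0..<Suc t])"
      unfolding concat_blocks length_append fw_conc_map_upt by simp
    then show "\<exists>t'\<ge>t. map (fw_conc (V 0) w) [0..<length (concat (map V [0..<t']))] =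
        concat (map V [0..<t'])"
      by (intro exI[of _ "Suc t"]) simp
  qed
qed

lemma infinite_nonempty_blocks_iff: "infinite {m. V m \<noteq> []} \<longleftrightarrow> infinite {t. X t \<noteq> []}"
proof
  assume inf: "infinite {m. V m \<noteq> []}"
  show "infinite {t. X t \<noteq> []}"
    unfolding infinite_nat_iff_unbounded_le
  proof
    fix T
    obtain k where "k \<ge> Suc T" "V k \<noteq> []"
      using inf unfolding infinite_nat_iff_unbounded_le by blast
    then obtain m where "m \<ge> T" "V (Suc m) \<noteq> []" by (cases k) auto
    then obtain t where "t \<in> set [B m..<B (Suc m)]" "X t \<noteq> []" using V_Suc by auto
    moreover have "B m \<ge> m" by (rule le_block_start)
    ultimately have "t \<ge> T" "X t \<noteq> []" using \<open>m \<ge> T\<close> by auto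
    then show "\<exists>t\<ge>T. t \<in> {t. X t \<noteq> []}" by blast
  qed
next
  assume inf: "infinite {t. X t \<noteq> []}"
  show "infinite {m. V m \<noteq> []}"
    unfolding infinite_nat_iff_unbounded_le
  proof
    fix T
    obtain t where t: "t \<ge> B T" "X t \<noteq> []" using inf unfolding infinite_nat_iff_unbounded_le by blast
    obtain m where m: "B m \<le> t" "t < B (Suc m)" by (rule block_containing)
    have "m \<ge> T"
    proof (rule ccontr)
      assume "\<not> T \<le> m"
      then have "B (Suc m) \<le> B T" using strict_mono_B by (simp add: strict_mono_less_eq)
      then show False using t m by simp
    qed
    moreover have "V (Suc m) \<noteq> []" using V_Suc m t(2) by auto
    ultimately show "\<exists>m'\<ge>T. m' \<in> {m. V m \<noteq> []}" by (intro exI[of _ "Suc m"]) auto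
  qed
qed

end

text \<open>The state sequence of a derivation of \<open>G\<^sub>l\<close> lists the first state of every block
  followed by the remaining states of the preceding block.\<close>
lemma omega_concat_states_iff:
  assumes "G 0 = [S 0]" "\<And>m. G (Suc m) = map S [Suc (B m)..<B (Suc m)] @ [S (B (Suc m))]"
  shows "omega_concat G js \<longleftrightarrow> js = S"
proof -
  have concat_G: "concat (map G [0..<Suc m]) = map S [0..<Suc (B m)]" for m
  proof (induction m)
    case 0
    then show ?case using assms(1) B_0 by simp
  next
    case (Suc m)
    have split: "[0..<Suc (B m)] @ [Suc (B m)..<B (Suc m)] = [0..<B (Suc m)]"
      using block_start_less[of m] by (metis Suc_leI le_add_diff_inverse upt_add_eq_append zero_le)
    have "concat (map G [0..<Suc (Suc m)]) = concat (map G [0..<Suc m]) @ G (Suc m)"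
      by simp
    also have "\<dots> = map S ([0..<Suc (B m)] @ [Suc (B m)..<B (Suc m)]) @ [S (B (Suc m))]"
      by (simp only: Suc assms(2) map_append append_assoc)
    also have "\<dots> = map S [0..<Suc (B (Suc m))]"
      by (simp only: split) simp
    finally show ?case .
  qed
  show ?thesis
  proof
    assume G: "omega_concat G js"
    show "js = S"
    proof
      fix t
      have "map js [0..<length (concat (map G [0..<Suc t]))] = concat (map G [0..<Suc t])"
        using G unfolding omega_concat_def by blast
      then have "map js [0..<Suc (B t)] = map S [0..<Suc (B t)]"
        unfolding concat_G by simp
      then show "js t = S t"
        using le_block_start[of t] by (auto simp: map_eq_conv le_imp_less_Suc le_less)
    qed
  next
    assume "js = S"
    show "omega_concat G js"
    proof (rule omega_concat_if_cofinal)
      fix t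
      have "map js [0..<length (concat (map G [0..<Suc t]))] = concat (map G [0..<Suc t])"
        unfolding concat_G \<open>js = S\<close> by simp
      then show "\<exists>t'\<ge>t. map js [0..<length (concat (map G [0..<t']))] = concat (map G [0..<t'])"
        by (intro exI[of _ "Suc t"]) simp
    qed
  qed
qed

end

section \<open>Infinite runs\<close>

definition pd_path :: "nat \<Rightarrow> ('g \<Rightarrow> 'g list \<Rightarrow> nat \<Rightarrow> nat \<Rightarrow> 'a option set) \<Rightarrow>
    (nat \<Rightarrow> 'g list) \<Rightarrow> (nat \<Rightarrow> nat) \<Rightarrow> (nat \<Rightarrow> 'a list) \<Rightarrow> bool" where
  "pd_path n Mb \<pi>s js X \<longleftrightarrow> (\<forall>t. X t \<in> pd_mat n Mb (\<pi>s t) (js t) (\<pi>s (Suc t)) (js (Suc t)))"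

lemma mem_mat_omega_iff:
  "w \<in> mat_omega n l (pd_mat n Mb) \<pi> i \<longleftrightarrow>
     (\<exists>\<pi>s js X. \<pi>s 0 = \<pi> \<and> js 0 = i \<and> (\<lambda>t. js (Suc t)) \<in> Pl n l \<and> pd_path n Mb \<pi>s js X \<and>
        infinite {t. X t \<noteq> []} \<and> omega_concat X w)"
  unfolding mat_omega_def inf_prod_def pd_path_def by blast

lemma pd_run_imp_steps:
  assumes "pd_run n Mb \<pi> i w ss \<pi>' j"
  shows "\<exists>P S X. P 0 = \<pi> \<and> S 0 = i \<and> P (length ss) = \<pi>' \<and> S (length ss) = j \<and>
    (\<forall>t<length ss. X t \<in> pd_mat n Mb (P t) (S t) (P (Suc t)) (S (Suc t))) \<and>
    w = concat (map X [0..<length ss]) \<and> ss = map S [0..<length ss]"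
  using assms
proof (induction rule: pd_run.induct)
  case (run_idle i \<pi>)
  show ?case by (intro exI[of _ "\<lambda>_. \<pi>"] exI[of _ "\<lambda>_. i"]) simp
next
  case (run_move a p ps i k \<pi> w ss \<pi>' j)
  then obtain P S X where IH: "P 0 = ps @ \<pi>" "S 0 = k" "P (length ss) = \<pi>'" "S (length ss) = j"
    "\<forall>t<length ss. X t \<in> pd_mat n Mb (P t) (S t) (P (Suc t)) (S (Suc t))"
    "w = concat (map X [0..<length ss])" "ss = map S [0..<length ss]"
    by blast
  define P' where "P' = case_nat (p # \<pi>) P"
  define S' where "S' = case_nat i S"
  define X' where "X' = case_nat (opt_word a) X"
  have "X' t \<in> pd_mat n Mb (P' t) (S' t) (P' (Suc t)) (S' (Suc t))" if "t < Suc (length ss)" for t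
    using that run_move.hyps IH(1,2,5) unfolding P'_def S'_def X'_def
    by (cases t) (auto simp: mem_pd_mat_iff)
  moreover have "opt_word a @ w = concat (map X' [0..<Suc (length ss)])"
    using IH(6) unfolding X'_def by (simp add: map_upt_Suc del: upt_Suc)
  moreover have "i # ss = map S' [0..<Suc (length ss)]"
    using IH(7) unfolding S'_def by (simp add: map_upt_Suc del: upt_Suc)
  ultimately show ?case using IH(3,4) unfolding P'_def S'_def
    by (intro exI[of _ P'] exI[of _ S'] exI[of _ X']) (simp add: P'_def S'_def)
qed

lemma glue_segments:
  fixes L :: "nat \<Rightarrow> nat" and F :: "nat \<Rightarrow> nat \<Rightarrow> 'x"
  assumes "\<And>m. 0 < L m"
  obtains f where "\<And>m d. d < L m \<Longrightarrow> f ((\<Sum>k<m. L k) + d) = F m d"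
proof -
  define B where "B m = (\<Sum>k<m. L k)" for m
  have B_Suc: "B (Suc m) = B m + L m" for m unfolding B_def by simp
  have "strict_mono B" unfolding strict_mono_Suc_iff B_Suc using assms by simp
  define blk where "blk t = (LEAST m. t < B (Suc m))" for t
  have blk: "blk (B m + d) = m" if "d < L m" for m d
    unfolding blk_def
  proof (rule Least_equality)
    show "B m + d < B (Suc m)" using that B_Suc by simp
  next
    fix m' assume "B m + d < B (Suc m')"
    then show "m \<le> m'" using \<open>strict_mono B\<close>
      by (metis not_less_eq_eq strict_mono_less_eq trans_le_add1 linorder_not_le)
  qed
  show thesis
    by (rule that[of "\<lambda>t. F (blk t) (t - B (blk t))"]) (use blk in \<open>simp add: B_def\<close>)
qed

lemma pd_runs_imp_pd_path:
  assumes runs: "\<And>m. pd_run n Mb (C m) (Q m) (W m) (SS m) (C (Suc m)) (Q (Suc m))"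
    and nonempty: "\<And>m. SS m \<noteq> []"
  obtains \<pi>s js X B where "strict_mono B" "B 0 = 0" "\<pi>s 0 = C 0" "pd_path n Mb \<pi>s js X"
    "\<And>m. W m = concat (map X [B m..<B (Suc m)])" "\<And>m. SS m = map js [B m..<B (Suc m)]"
    "\<And>m. js (B m) = Q m"
proof -
  obtain P S Y where F: "\<And>m. P m 0 = C m \<and> S m 0 = Q m \<and> P m (length (SS m)) = C (Suc m) \<and>
      S m (length (SS m)) = Q (Suc m) \<and>
      (\<forall>t<length (SS m). Y m t \<in> pd_mat n Mb (P m t) (S m t) (P m (Suc t)) (S m (Suc t))) \<and>
      W m = concat (map (Y m) [0..<length (SS m)]) \<and> SS m = map (S m) [0..<length (SS m)]"
    using pd_run_imp_steps[OF runs] by metis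
  define L where "L m = length (SS m)" for m
  have L_pos: "0 < L m" for m using nonempty[of m] unfolding L_def by simp
  obtain f where f: "\<And>m d. d < L m \<Longrightarrow> f ((\<Sum>k<m. L k) + d) = (P m d, S m d, Y m d)"
    using glue_segments[of L "\<lambda>m d. (P m d, S m d, Y m d)"] L_pos by blast
  define B where "B m = (\<Sum>k<m. L k)" for m
  define \<pi>s where "\<pi>s t = fst (f t)" for t
  define js where "js t = fst (snd (f t))" for t
  define X where "X t = snd (snd (f t))" for t
  have B_Suc: "B (Suc m) = B m + L m" for m unfolding B_def by simp
  have mono: "strict_mono B" unfolding strict_mono_Suc_iff B_Suc using L_pos by simp
  have at: "\<pi>s (B m + d) = P m d \<and> js (B m + d) = S m d \<and> X (B m + d) = Y m d" if "d < L m" for m d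
    using f[OF that] unfolding \<pi>s_def js_def X_def B_def by simp
  have at_start: "\<pi>s (B m) = C m \<and> js (B m) = Q m" for m
    using at[of 0 m] L_pos[of m] F[of m] by simp
  have at_Suc: "\<pi>s (B m + Suc d) = P m (Suc d) \<and> js (B m + Suc d) = S m (Suc d)"
    if "d < L m" for m d
  proof (cases "Suc d < L m")
    case True
    then show ?thesis using at by blast
  next
    case False
    then have "B m + Suc d = B (Suc m)" "Suc d = L m" using that B_Suc by auto
    then show ?thesis using at_start[of "Suc m"] F[of m] unfolding L_def by simp
  qed
  have "pd_path n Mb \<pi>s js X"
    unfolding pd_path_def
  proof
    fix t
    obtain m where "B m \<le> t" "t < B (Suc m)" using block_containing[OF mono] B_def by auto
    then obtain d where "t = B m + d" "d < L m" using B_Suc by (metis add_less_cancel_left le_Suc_ex)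
    then show "X t \<in> pd_mat n Mb (\<pi>s t) (js t) (\<pi>s (Suc t)) (js (Suc t))"
      using at at_Suc F[of m] unfolding L_def by (metis add_Suc_right)
  qed
  moreover have "map X [B m..<B (Suc m)] = map (Y m) [0..<L m]"
    and "map js [B m..<B (Suc m)] = map (S m) [0..<L m]" for m
    unfolding B_Suc using at by (auto intro!: nth_equalityI)
  then have "W m = concat (map X [B m..<B (Suc m)])" "SS m = map js [B m..<B (Suc m)]" for m
    using F[of m] unfolding L_def by simp_all
  moreover have "B 0 = 0" unfolding B_def by simp
  ultimately show thesis
    using that[OF mono] at_start by (metis (no_types, lifting))
qed

lemma pd_path_step:
  assumes "pd_path n Mb \<pi>s js X"
  obtains p \<rho> ps a where "\<pi>s t = p # \<rho>" "\<pi>s (Suc t) = ps @ \<rho>" "a \<in> Mb p ps (js t) (js (Suc t))"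
    "X t = opt_word a" "js t \<in> {1..n}" "js (Suc t) \<in> {1..n}"
  using assms unfolding pd_path_def mem_pd_mat_iff by blast

section \<open>Cutting an infinite run where the stack height attains its future minimum\<close>

definition future_min :: "(nat \<Rightarrow> nat) \<Rightarrow> nat \<Rightarrow> bool" where
  "future_min h t \<longleftrightarrow> (\<forall>t'\<ge>t. h t \<le> h t')"

lemma future_min_after:
  obtains s' where "s \<le> s'" "future_min h s'" "\<And>r. s \<le> r \<Longrightarrow> r < s' \<Longrightarrow> h s' < h r"
proof -
  define v where "v = (LEAST v. \<exists>r\<ge>s. h r = v)"
  have v_le: "v \<le> h r" if "r \<ge> s" for r unfolding v_def using that by (auto intro: Least_le)
  have "\<exists>r\<ge>s. h r = v" unfolding v_def by (rule LeastI_ex) auto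
  then have s': "s \<le> (LEAST r. s \<le> r \<and> h r = v) \<and> h (LEAST r. s \<le> r \<and> h r = v) = v"
    by (metis (mono_tags, lifting) LeastI_ex)
  show thesis
  proof (rule that[of "LEAST r. s \<le> r \<and> h r = v"])
    show "future_min h (LEAST r. s \<le> r \<and> h r = v)"
      unfolding future_min_def using s' v_le by auto
  next
    fix r assume "s \<le> r" "r < (LEAST r. s \<le> r \<and> h r = v)"
    then have "h r \<noteq> v" using not_less_Least by blast
    then show "h (LEAST r. s \<le> r \<and> h r = v) < h r" using s' v_le[OF \<open>s \<le> r\<close>] by simp
  qed (use s' in simp)
qed

lemma future_min_blocks:
  assumes "future_min h 0"
  obtains B where "strict_mono B" "B 0 = 0" "\<And>m. future_min h (B m)"
    "\<And>m s. B m < s \<Longrightarrow> s < B (Suc m) \<Longrightarrow> h (B (Suc m)) < h s"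
proof -
  have exists: "\<exists>s. b < s \<and> future_min h s" for b
  proof -
    obtain s where "Suc b \<le> s" "future_min h s" "\<And>r. Suc b \<le> r \<Longrightarrow> r < s \<Longrightarrow> h s < h r"
      by (rule future_min_after[of "Suc b" h]) blast
    then show ?thesis by (auto simp: Suc_le_eq)
  qed
  define B where "B = rec_nat 0 (\<lambda>_ b. LEAST s. b < s \<and> future_min h s)"
  have B_Suc: "B (Suc m) = (LEAST s. B m < s \<and> future_min h s)" for m unfolding B_def by simp
  have next_min: "B m < B (Suc m) \<and> future_min h (B (Suc m))" for m
    unfolding B_Suc by (rule LeastI_ex[OF exists])
  have B_min: "future_min h (B m)" for m
    using assms next_min by (cases m) (auto simp: B_def)
  have no_min_between: "\<not> future_min h s" if "B m < s" "s < B (Suc m)" for m s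
    using not_less_Least[of s "\<lambda>s. B m < s \<and> future_min h s"] that unfolding B_Suc by auto
  have low: "h (B (Suc m)) < h s" if s: "B m < s" "s < B (Suc m)" for m s
  proof -
    obtain s' where s': "s \<le> s'" "future_min h s'" "\<And>r. s \<le> r \<Longrightarrow> r < s' \<Longrightarrow> h s' < h r"
      by (rule future_min_after[of s h]) blast
    have "s' = B (Suc m)"
    proof (rule linorder_cases[of s' "B (Suc m)"])
      assume "s' < B (Suc m)"
      then show ?thesis using no_min_between[of m s'] s s' by auto
    next
      assume "s' > B (Suc m)"
      then have "h s' < h (B (Suc m))" using s'(3) s by auto
      moreover have "h (B (Suc m)) \<le> h s'"
        using B_min[of "Suc m"] \<open>s' > B (Suc m)\<close> unfolding future_min_def by auto
      ultimately show ?thesis by simp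
    qed
    then show ?thesis using s'(3) s by auto
  qed
  have "strict_mono B" unfolding strict_mono_Suc_iff using next_min by blast
  moreover have "B 0 = 0" unfolding B_def by simp
  ultimately show thesis using that B_min low by blast
qed

text \<open>A stretch of the run that stays strictly above its final stack height never touches the
  part of the stack below that height.\<close>
lemma pd_path_run_above:
  assumes path: "pd_path n Mb \<pi>s js X" and "a \<le> b"
    and above: "\<And>s. a \<le> s \<Longrightarrow> s < b \<Longrightarrow> length (\<pi>s b) < length (\<pi>s s)"
  shows "drop (length (\<pi>s a) - length (\<pi>s b)) (\<pi>s a) = \<pi>s b \<and>
    pd_run n Mb (take (length (\<pi>s a) - length (\<pi>s b)) (\<pi>s a)) (js a)
      (concat (map X [a..<b])) (map js [a..<b]) [] (js b)"
  using \<open>a \<le> b\<close>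
proof (induction a rule: inc_induct)
  case base
  obtain p \<rho> ps x where "js b \<in> {1..n}" by (rule pd_path_step[OF path, of b])
  then show ?case by (simp add: run_idle)
next
  case (step k)
  obtain p \<rho> ps x where k: "\<pi>s k = p # \<rho>" "\<pi>s (Suc k) = ps @ \<rho>" "x \<in> Mb p ps (js k) (js (Suc k))"
    "X k = opt_word x" "js k \<in> {1..n}" "js (Suc k) \<in> {1..n}"
    by (rule pd_path_step[OF path, of k])
  define e where "e = length \<rho> - length (\<pi>s b)"
  have "length (\<pi>s b) < length (\<pi>s k)" using above step.hyps by simp
  then have d: "length (\<pi>s k) - length (\<pi>s b) = Suc e"
    "length (\<pi>s (Suc k)) - length (\<pi>s b) = length ps + e"
    using k unfolding e_def by auto
  have "[k..<b] = k # [Suc k..<b]" using step.hyps(2) by (rule upt_conv_Cons)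
  moreover have "pd_run n Mb (ps @ take e \<rho>) (js (Suc k)) (concat (map X [Suc k..<b]))
      (map js [Suc k..<b]) [] (js b)"
    using step.IH k(2) unfolding d by simp
  with k(3,5,6) have "pd_run n Mb (p # take e \<rho>) (js k) (opt_word x @ concat (map X [Suc k..<b]))
      (js k # map js [Suc k..<b]) [] (js b)"
    by (rule run_move)
  ultimately show ?case using k step.IH unfolding d by simp
qed

lemma GZ_ZpI:
  assumes "i \<in> {1..n}" "length L = Suc k" "k < length ps" "set L \<subseteq> {1..n}" "a \<in> Mb p ps i (L ! 0)"
  shows "GZ n Mb Iv p0 (Zp i p)
    (opt_tm a @ map (\<lambda>r. Trip (L ! r) (ps ! r) (L ! Suc r)) [0..<k] @ [Zp (L ! k) (ps ! k)])"
proof -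
  have "GZ n Mb Iv p0 (Zp i p) (opt_tm a @ map (\<lambda>r. Trip (L ! r) (ps ! r) (L ! Suc r)) [0..<Suc k - 1]
      @ [Zp (L ! (Suc k - 1)) (ps ! (Suc k - 1))])"
    unfolding GZ_def
    by (rule disjI2, rule exI[of _ i], rule exI[of _ p], rule exI[of _ ps], rule exI[of _ L],
        rule exI[of _ "Suc k"], rule exI[of _ a]) (use assms in simp)
  then show ?thesis by simp
qed

lemma GZ_ZpE:
  assumes "GZ n Mb Iv p0 (Zp i p) (\<alpha> @ [Zp i' p'])"
  obtains ps L k a where "i \<in> {1..n}" "length L = Suc k" "k < length ps" "set L \<subseteq> {1..n}"
    "a \<in> Mb p ps i (L ! 0)" "\<alpha> = opt_tm a @ map (\<lambda>r. Trip (L ! r) (ps ! r) (L ! Suc r)) [0..<k]"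
    "i' = L ! k" "p' = ps ! k"
proof -
  from assms obtain ps L jj a where "i \<in> {1..n}" "1 \<le> jj" "jj \<le> length ps" "length L = jj"
    "set L \<subseteq> {1..n}" "a \<in> Mb p ps i (L ! 0)"
    and rhs: "\<alpha> @ [Zp i' p'] = (opt_tm a @ map (\<lambda>r. Trip (L ! r) (ps ! r) (L ! Suc r)) [0..<jj - 1])
      @ [Zp (L ! (jj - 1)) (ps ! (jj - 1))]"
    unfolding GZ_def by auto
  moreover from rhs have "\<alpha> = opt_tm a @ map (\<lambda>r. Trip (L ! r) (ps ! r) (L ! Suc r)) [0..<jj - 1]"
    "i' = L ! (jj - 1)" "p' = ps ! (jj - 1)"
    unfolding append1_eq_conv by auto
  ultimately show thesis using that[of L "jj - 1" ps a] by simp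
qed

lemma pd_path_segment_Z_production:
  assumes path: "pd_path n Mb \<pi>s js X" and "t < t'"
    and min: "length (\<pi>s t) \<le> length (\<pi>s t')"
    and above: "\<And>s. t < s \<Longrightarrow> s < t' \<Longrightarrow> length (\<pi>s t') < length (\<pi>s s)"
  obtains a xs where
    "GZ n Mb Iv p0 (Zp (js t) (hd (\<pi>s t))) (opt_tm a @ xs @ [Zp (js t') (hd (\<pi>s t'))])"
    "lderiv (GX n Mb Iv Pv p0) (opt_tm a @ xs) (map js [Suc t..<t'])
       (map Tm (concat (map X [t..<t'])))"
proof -
  obtain p \<rho> ps a where step: "\<pi>s t = p # \<rho>" "\<pi>s (Suc t) = ps @ \<rho>" "a \<in> Mb p ps (js t) (js (Suc t))"
    "X t = opt_word a" "js t \<in> {1..n}"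
    by (rule pd_path_step[OF path, of t])
  define k where "k = length (\<pi>s (Suc t)) - length (\<pi>s t')"
  have "length (\<pi>s t') \<le> length (\<pi>s (Suc t))"
    using above[of "Suc t"] \<open>t < t'\<close> by (cases "Suc t = t'") auto
  with min step have k: "k < length ps" unfolding k_def by auto
  from pd_path_run_above[OF path, of "Suc t" t'] above \<open>t < t'\<close>
  have "\<pi>s t' = drop k ps @ \<rho>"
    and run: "pd_run n Mb (take k ps) (js (Suc t)) (concat (map X [Suc t..<t'])) (map js [Suc t..<t'])
      [] (js t')"
    using k step(2) unfolding k_def by auto
  then have "hd (\<pi>s t') = ps ! k" using k by (simp add: hd_append2 hd_drop_conv_nth)
  obtain xs where "trip_chain n (js (Suc t)) (take k ps) (js t') xs"
    and derivation: "lderiv (GX n Mb Iv Pv p0) xs (map js [Suc t..<t']) (map Tm (concat (map X [Suc t..<t'])))"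
    using pd_run_imp_lderiv_trip_chain[OF run] by blast
  then obtain L where L: "length L = Suc k" "L ! 0 = js (Suc t)" "L ! k = js t'" "set L \<subseteq> {1..n}"
    and "xs = map (\<lambda>r. Trip (L ! r) (take k ps ! r) (L ! Suc r)) [0..<k]"
    using trip_chain_imp_map k by fastforce
  then have xs: "xs = map (\<lambda>r. Trip (L ! r) (ps ! r) (L ! Suc r)) [0..<k]" by simp
  show thesis
  proof (rule that)
    show "GZ n Mb Iv p0 (Zp (js t) (hd (\<pi>s t))) (opt_tm a @ xs @ [Zp (js t') (hd (\<pi>s t'))])"
      using GZ_ZpI[where i = "js t" and L = L and k = k and ps = ps and a = a and p = p]
        step L k \<open>hd (\<pi>s t') = ps ! k\<close> xs by simp
    have "concat (map X [t..<t']) = opt_word a @ concat (map X [Suc t..<t'])"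
      using \<open>t < t'\<close> step(4) by (simp add: upt_conv_Cons)
    then show "lderiv (GX n Mb Iv Pv p0) (opt_tm a @ xs) (map js [Suc t..<t'])
        (map Tm (concat (map X [t..<t'])))"
      using lderiv_prepend_terminals[OF derivation, of "opt_word a"] by (simp add: opt_tm_eq_map)
  qed
qed

lemma pd_path_Z_blocks:
  assumes path: "pd_path n Mb \<pi>s js X" and "\<pi>s 0 = [p0]"
  obtains B a xs where "strict_mono B" "B 0 = 0"
    "\<And>m. GZ n Mb Iv p0 (Zp (js (B m)) (hd (\<pi>s (B m))))
        (opt_tm (a m) @ xs m @ [Zp (js (B (Suc m))) (hd (\<pi>s (B (Suc m))))])"
    "\<And>m. lderiv (GX n Mb Iv Pv p0) (opt_tm (a m) @ xs m) (map js [Suc (B m)..<B (Suc m)])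
        (map Tm (concat (map X [B m..<B (Suc m)])))"
proof -
  have "\<pi>s t \<noteq> []" for t by (rule pd_path_step[OF path, of t]) auto
  then have "future_min (\<lambda>t. length (\<pi>s t)) 0"
    unfolding future_min_def using \<open>\<pi>s 0 = [p0]\<close> by (simp add: Suc_leI)
  then obtain B where B: "strict_mono B" "B 0 = 0" "\<And>m. future_min (\<lambda>t. length (\<pi>s t)) (B m)"
    "\<And>m s. B m < s \<Longrightarrow> s < B (Suc m) \<Longrightarrow> length (\<pi>s (B (Suc m))) < length (\<pi>s s)"
    by (rule future_min_blocks) blast
  have "B m < B (Suc m)" for m using B(1) by (simp add: strict_mono_Suc_iff)
  moreover have "length (\<pi>s (B m)) \<le> length (\<pi>s (B (Suc m)))" for m
    using B(3)[of m] \<open>B m < B (Suc m)\<close> unfolding future_min_def by simp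
  ultimately have "\<exists>a xs. GZ n Mb Iv p0 (Zp (js (B m)) (hd (\<pi>s (B m))))
        (opt_tm a @ xs @ [Zp (js (B (Suc m))) (hd (\<pi>s (B (Suc m))))]) \<and>
      lderiv (GX n Mb Iv Pv p0) (opt_tm a @ xs) (map js [Suc (B m)..<B (Suc m)])
        (map Tm (concat (map X [B m..<B (Suc m)])))" for m
    by (meson B(4) pd_path_segment_Z_production[OF path])
  then show thesis using that[OF B(1,2)] by metis
qed

section \<open>Infinite words\<close>

definition omega_lderivable ::
  "(('a,'g) gsym \<Rightarrow> ('a,'g) gsym list \<Rightarrow> bool) \<Rightarrow> (('a,'g) gsym \<Rightarrow> ('a,'g) gsym list \<Rightarrow> bool) \<Rightarrow>
   nat \<Rightarrow> nat \<Rightarrow> (nat \<Rightarrow> 'a) \<Rightarrow> bool" where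
  "omega_lderivable RX RZ n l w \<longleftrightarrow> (\<exists>\<alpha> iz q ws is.
     RZ Z0 (\<alpha> 0 @ [Zp (iz 0) (q 0)]) \<and>
     (\<forall>m. RZ (Zp (iz m) (q m)) (\<alpha> (Suc m) @ [Zp (iz (Suc m)) (q (Suc m))])) \<and>
     (\<forall>m. lderiv RX (\<alpha> m) (is m) (map Tm (ws m))) \<and>
     infinite {m. ws m \<noteq> []} \<and> omega_concat ws w \<and>
     (\<exists>js. omega_concat (\<lambda>m. case m of 0 \<Rightarrow> [iz 0] | Suc k \<Rightarrow> is (Suc k) @ [iz (Suc k)]) js
           \<and> js \<in> Pl n l))"

lemma mcfg_lang_eq:
  "mcfg_lang RX RZ n l =
     Inl ` {w. \<exists>is. lderiv RX [X0] is (map Tm w)} \<union> Inr ` Collect (omega_lderivable RX RZ n l)"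
  unfolding mcfg_lang_def omega_lderivable_def ..

lemma GZ_Z0I: "i \<in> {1..n} \<Longrightarrow> a \<in> Iv i \<Longrightarrow> GZ n Mb Iv p0 Z0 (opt_tm a @ [Zp i p0])"
  unfolding GZ_def by (rule disjI1) (auto intro!: exI[of _ a] exI[of _ i])

lemma GZ_Z0E:
  assumes "GZ n Mb Iv p0 Z0 (\<alpha> @ [Zp i p])"
  obtains a where "i \<in> {1..n}" "a \<in> Iv i" "\<alpha> = opt_tm a" "p = p0"
proof -
  from assms obtain a m where "m \<in> {1..n}" "a \<in> Iv m" "\<alpha> @ [Zp i p] = opt_tm a @ [Zp m p0]"
    unfolding GZ_def by blast
  with that show thesis by simp
qed

lemma lderiv_GX_terminals:
  assumes "lderiv (GX n Mb Iv Pv p0) (map Tm u) is \<gamma>"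
  shows "\<gamma> = map Tm u"
  using assms
proof (cases rule: lderiv.cases)
  case (step A rhs u' \<beta> is')
  then have "A \<in> set (map Tm u)" by (metis in_set_conv_decomp)
  then show ?thesis using GX_lhs_not_terminal[OF step(3)] by auto
qed simp

text \<open>One step \<open>[i,p] \<rightarrow> a [m\<^sub>1,p\<^sub>1,m\<^sub>2]\<dots>[m\<^sub>k,p\<^sub>k,m\<^sub>k\<^sub>+\<^sub>1][m\<^sub>k\<^sub>+\<^sub>1,p\<^sub>k\<^sub>+\<^sub>1]\<close> followed by
  derivations of the triple variables is a run that replaces \<open>p\<close> by the unpopped
  suffix \<open>p\<^sub>k\<^sub>+\<^sub>1\<dots>\<close> of the pushed word.\<close>
lemma GZ_step_imp_pd_run:
  assumes "GZ n Mb Iv p0 (Zp i p) (\<alpha> @ [Zp i' p'])" and "lderiv (GX n Mb Iv Pv p0) \<alpha> is (map Tm w)"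
  obtains \<sigma> where "\<sigma> \<noteq> []" "hd \<sigma> = p'" "\<And>\<rho>. pd_run n Mb (p # \<rho>) i w (i # is) (\<sigma> @ \<rho>) i'"
proof -
  from assms(1) obtain ps L k a where L: "i \<in> {1..n}" "length L = Suc k" "k < length ps"
    "set L \<subseteq> {1..n}" "a \<in> Mb p ps i (L ! 0)" and i': "i' = L ! k" "p' = ps ! k"
    and \<alpha>: "\<alpha> = opt_tm a @ map (\<lambda>r. Trip (L ! r) (ps ! r) (L ! Suc r)) [0..<k]"
    by (rule GZ_ZpE)
  have chain: "trip_chain n (L ! 0) (take k ps) (L ! k)
      (map (\<lambda>r. Trip (L ! r) (ps ! r) (L ! Suc r)) [0..<k])"
    using L by (intro trip_chain_map) auto
  have "\<alpha> = map Tm (opt_word a) @ map (\<lambda>r. Trip (L ! r) (ps ! r) (L ! Suc r)) [0..<k] @ map Tm []"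
    using \<alpha> by (simp add: opt_tm_eq_map)
  from lderiv_trip_chain_imp_pd_run[OF assms(2) HOL.refl this chain]
  obtain w' where "w = opt_word a @ w' @ []" and run: "pd_run n Mb (take k ps) (L ! 0) w' is [] (L ! k)"
    by blast
  then have w: "w = opt_word a @ w'" by simp
  show thesis
  proof (rule that)
    show "drop k ps \<noteq> []" "hd (drop k ps) = p'" using L(3) i' by (simp_all add: hd_drop_conv_nth)
    fix \<rho>
    have "L ! 0 \<in> {1..n}" using L(2,4) by (simp add: subset_iff)
    moreover have "pd_run n Mb (ps @ \<rho>) (L ! 0) w' is (drop k ps @ \<rho>) (L ! k)"
      using pd_run_append_stack[OF run, of "drop k ps @ \<rho>"]
      by (metis append_Nil append_assoc append_take_drop_id)
    ultimately show "pd_run n Mb (p # \<rho>) i w (i # is) (drop k ps @ \<rho>) i'"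
      unfolding w i' using L(5,1) by (rule_tac run_move)
  qed
qed

lemma GZ_derivation_imp_pd_runs:
  fixes Mb :: "'g \<Rightarrow> 'g list \<Rightarrow> nat \<Rightarrow> nat \<Rightarrow> 'a option set"
  assumes Z0: "GZ n Mb Iv p0 Z0 (\<alpha> 0 @ [Zp (iz 0) (q 0)])"
    and Zs: "\<And>m. GZ n Mb Iv p0 (Zp (iz m) (q m)) (\<alpha> (Suc m) @ [Zp (iz (Suc m)) (q (Suc m))])"
    and X: "\<And>m. lderiv (GX n Mb Iv Pv p0) (\<alpha> m) (iss m) (map Tm (ws m))"
  obtains a0 st where "iz 0 \<in> {1..n}" "a0 \<in> Iv (iz 0)" "ws 0 = opt_word a0" "st 0 = [p0]"
    "\<And>m. pd_run n Mb (st m) (iz m) (ws (Suc m)) (iz m # iss (Suc m)) (st (Suc m)) (iz (Suc m))"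
proof -
  from Z0 obtain a0 where a0: "iz 0 \<in> {1..n}" "a0 \<in> Iv (iz 0)" "\<alpha> 0 = opt_tm a0" "q 0 = p0"
    by (rule GZ_Z0E)
  have "map Tm (ws 0) = (map Tm (opt_word a0) :: ('a,'g) gsym list)"
    using lderiv_GX_terminals X[of 0] a0(3) by (metis opt_tm_eq_map)
  then have ws0: "ws 0 = opt_word a0" by (rule map_injective) (simp add: inj_def)
  have "\<exists>\<sigma>. \<sigma> \<noteq> [] \<and> hd \<sigma> = q (Suc m) \<and>
      (\<forall>\<rho>. pd_run n Mb (q m # \<rho>) (iz m) (ws (Suc m)) (iz m # iss (Suc m)) (\<sigma> @ \<rho>) (iz (Suc m)))" for m
    by (rule GZ_step_imp_pd_run[OF Zs X]) blast
  then obtain \<sigma> where \<sigma>: "\<And>m. \<sigma> m \<noteq> [] \<and> hd (\<sigma> m) = q (Suc m) \<and>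
      (\<forall>\<rho>. pd_run n Mb (q m # \<rho>) (iz m) (ws (Suc m)) (iz m # iss (Suc m)) (\<sigma> m @ \<rho>) (iz (Suc m)))"
    by metis
  define st where "st = rec_nat [p0] (\<lambda>m s. \<sigma> m @ tl s)"
  have st_0: "st 0 = [p0]" and st_Suc: "st (Suc m) = \<sigma> m @ tl (st m)" for m
    unfolding st_def by simp_all
  have \<sigma>_Cons: "\<sigma> m = q (Suc m) # tl (\<sigma> m)" for m using \<sigma>[of m] by (metis list.collapse)
  have st_hd: "st m = q m # tl (st m)" for m
  proof (cases m)
    case 0
    then show ?thesis using a0(4) st_0 by simp
  next
    case (Suc k)
    then show ?thesis using st_Suc[of k] \<sigma>_Cons[of k] by (metis append_Cons list.sel(3))
  qed
  show thesis
  proof (rule that[of a0 st])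
    fix m
    show "pd_run n Mb (st m) (iz m) (ws (Suc m)) (iz m # iss (Suc m)) (st (Suc m)) (iz (Suc m))"
      using \<sigma>[of m] st_hd[of m] st_Suc[of m] by metis
  qed (use a0 ws0 st_0 in auto)
qed

lemma omega_lderivable_imp_behaviour:
  assumes "omega_lderivable (GX n Mb Iv Pv p0) (GZ n Mb Iv p0) n l W"
  obtains i u w where "i \<in> {1..n}" "u \<in> sym_lang (Iv i)" "w \<in> mat_omega n l (pd_mat n Mb) [p0] i"
    "W = fw_conc u w"
proof -
  from assms obtain \<alpha> iz q ws iss jsg where
    Z0: "GZ n Mb Iv p0 Z0 (\<alpha> 0 @ [Zp (iz 0) (q 0)])"
    and Zs: "\<And>m. GZ n Mb Iv p0 (Zp (iz m) (q m)) (\<alpha> (Suc m) @ [Zp (iz (Suc m)) (q (Suc m))])"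
    and X: "\<And>m. lderiv (GX n Mb Iv Pv p0) (\<alpha> m) (iss m) (map Tm (ws m))"
    and inf: "infinite {m. ws m \<noteq> []}" and W: "omega_concat ws W"
    and states: "omega_concat (\<lambda>m. case m of 0 \<Rightarrow> [iz 0] | Suc k \<Rightarrow> iss (Suc k) @ [iz (Suc k)]) jsg"
    and "jsg \<in> Pl n l"
    unfolding omega_lderivable_def by blast
  obtain a0 st where a0: "iz 0 \<in> {1..n}" "a0 \<in> Iv (iz 0)" "ws 0 = opt_word a0" "st 0 = [p0]"
    and runs: "\<And>m. pd_run n Mb (st m) (iz m) (ws (Suc m)) (iz m # iss (Suc m)) (st (Suc m)) (iz (Suc m))"
    by (rule GZ_derivation_imp_pd_runs[OF Z0 Zs X]) blast
  obtain \<pi>s js Y B where B: "strict_mono B" "B 0 = 0" and "\<pi>s 0 = st 0" "pd_path n Mb \<pi>s js Y"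
    and ws: "\<And>m. ws (Suc m) = concat (map Y [B m..<B (Suc m)])"
    and iz_iss: "\<And>m. iz m # iss (Suc m) = map js [B m..<B (Suc m)]"
    and iz: "\<And>m. js (B m) = iz m"
    by (rule pd_runs_imp_pd_path[where C = st and Q = iz and W = "\<lambda>m. ws (Suc m)"
          and SS = "\<lambda>m. iz m # iss (Suc m)", OF runs]) blast+
  have "[B m..<B (Suc m)] = B m # [Suc (B m)..<B (Suc m)]" for m
    using B by (simp add: strict_mono_Suc_iff upt_conv_Cons)
  then have iss: "iss (Suc m) = map js [Suc (B m)..<B (Suc m)]" for m
    using iz_iss[of m] by simp
  define w where "w k = W (k + length (ws 0))" for k
  have "W = fw_conc (ws 0) w"
    unfolding w_def using W by (rule omega_concat_eq_fw_conc)
  then have "omega_concat Y w" using omega_concat_blocks_iff[OF B ws] W by simp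
  moreover have "infinite {t. Y t \<noteq> []}" using infinite_nonempty_blocks_iff[OF B ws] inf by simp
  moreover have "omega_concat (\<lambda>m. case m of 0 \<Rightarrow> [iz 0] | Suc k \<Rightarrow> iss (Suc k) @ [iz (Suc k)]) jsg
      \<longleftrightarrow> jsg = js"
    by (rule omega_concat_states_iff[OF B]) (use iz[of 0, unfolded B(2)] iz iss in auto)
  with states have "jsg = js" by simp
  then have "(\<lambda>t. js (Suc t)) \<in> Pl n l"
    using Pl_Suc_iff[of js] \<open>jsg \<in> Pl n l\<close> iz[of 0, unfolded B(2)] a0(1) by simp
  ultimately have "w \<in> mat_omega n l (pd_mat n Mb) [p0] (iz 0)"
    unfolding mem_mat_omega_iff using \<open>\<pi>s 0 = st 0\<close> \<open>pd_path n Mb \<pi>s js Y\<close> a0(4) B(2) iz by metis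
  moreover have "ws 0 \<in> sym_lang (Iv (iz 0))" using a0 by (simp add: sym_lang_eq_image)
  ultimately show thesis using that a0(1) \<open>W = fw_conc (ws 0) w\<close> by blast
qed

lemma behaviour_imp_omega_lderivable:
  fixes Mb :: "'g \<Rightarrow> 'g list \<Rightarrow> nat \<Rightarrow> nat \<Rightarrow> 'a option set"
  assumes "i \<in> {1..n}" "a0 \<in> Iv i" "w \<in> mat_omega n l (pd_mat n Mb) [p0] i"
  shows "omega_lderivable (GX n Mb Iv Pv p0) (GZ n Mb Iv p0) n l (fw_conc (opt_word a0) w)"
proof -
  from assms(3) obtain \<pi>s js X where "\<pi>s 0 = [p0]" "js 0 = i" "(\<lambda>t. js (Suc t)) \<in> Pl n l"
    "pd_path n Mb \<pi>s js X" "infinite {t. X t \<noteq> []}" "omega_concat X w"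
    unfolding mem_mat_omega_iff by blast
  obtain B a xs where B: "strict_mono B" "B 0 = 0"
    and Z: "\<And>m. GZ n Mb Iv p0 (Zp (js (B m)) (hd (\<pi>s (B m))))
        (opt_tm (a m) @ xs m @ [Zp (js (B (Suc m))) (hd (\<pi>s (B (Suc m))))])"
    and derivation: "\<And>m. lderiv (GX n Mb Iv Pv p0) (opt_tm (a m) @ xs m) (map js [Suc (B m)..<B (Suc m)])
        (map Tm (concat (map X [B m..<B (Suc m)])))"
    by (rule pd_path_Z_blocks[OF \<open>pd_path n Mb \<pi>s js X\<close> \<open>\<pi>s 0 = [p0]\<close>]) blast+
  define \<alpha> where "\<alpha> = case_nat (opt_tm a0) (\<lambda>m. opt_tm (a m) @ xs m)"
  define iz where "iz m = js (B m)" for m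
  define q where "q m = hd (\<pi>s (B m))" for m
  define ws where "ws = case_nat (opt_word a0) (\<lambda>m. concat (map X [B m..<B (Suc m)]))"
  define iss where "iss = case_nat [] (\<lambda>m. map js [Suc (B m)..<B (Suc m)])"
  have ws_Suc: "ws (Suc m) = concat (map X [B m..<B (Suc m)])" for m unfolding ws_def by simp
  have "GZ n Mb Iv p0 Z0 (\<alpha> 0 @ [Zp (iz 0) (q 0)])"
    unfolding \<alpha>_def iz_def q_def using B(2) \<open>\<pi>s 0 = [p0]\<close> \<open>js 0 = i\<close> assms(1,2) by (simp add: GZ_Z0I)
  moreover have "GZ n Mb Iv p0 (Zp (iz m) (q m)) (\<alpha> (Suc m) @ [Zp (iz (Suc m)) (q (Suc m))])" for m
    unfolding \<alpha>_def iz_def q_def using Z by simp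
  moreover have "lderiv (GX n Mb Iv Pv p0) (\<alpha> m) (iss m) (map Tm (ws m))" for m
    using derivation unfolding \<alpha>_def iss_def ws_def by (cases m) (simp_all add: opt_tm_eq_map lderiv.refl)
  moreover have "infinite {m. ws m \<noteq> []}"
    using infinite_nonempty_blocks_iff[OF B ws_Suc] \<open>infinite {t. X t \<noteq> []}\<close> by simp
  moreover have "omega_concat ws (fw_conc (opt_word a0) w)"
    using omega_concat_blocks_iff[OF B ws_Suc] \<open>omega_concat X w\<close> unfolding ws_def by simp
  moreover have "omega_concat (\<lambda>m. case m of 0 \<Rightarrow> [iz 0] | Suc k \<Rightarrow> iss (Suc k) @ [iz (Suc k)]) js"
    by (subst omega_concat_states_iff[OF B]) (simp_all add: iz_def iss_def B(2))
  moreover have "js \<in> Pl n l" using Pl_Suc_iff[of js] \<open>js 0 = i\<close> assms(1) \<open>(\<lambda>t. js (Suc t)) \<in> Pl n l\<close> by simp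
  ultimately show ?thesis unfolding omega_lderivable_def by blast
qed

lemma omega_lderivable_eq_behaviour:
  "Collect (omega_lderivable (GX n Mb Iv Pv p0) (GZ n Mb Iv p0) n l) =
   (\<Union>i\<in>{1..n}. {fw_conc u w | u w. u \<in> sym_lang (Iv i) \<and> w \<in> mat_omega n l (pd_mat n Mb) [p0] i})"
  (is "?L = ?R")
proof
  show "?L \<subseteq> ?R"
  proof
    fix W assume "W \<in> ?L"
    then obtain i u w where "i \<in> {1..n}" "u \<in> sym_lang (Iv i)"
      "w \<in> mat_omega n l (pd_mat n Mb) [p0] i" "W = fw_conc u w"
      by (auto elim: omega_lderivable_imp_behaviour)
    then show "W \<in> ?R" by blast
  qed
next
  show "?R \<subseteq> ?L" by (auto simp: sym_lang_eq_image intro: behaviour_imp_omega_lderivable)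
qed

theorem corollary15:
  fixes n :: nat
    and Mb :: "'g::finite \<Rightarrow> 'g list \<Rightarrow> nat \<Rightarrow> nat \<Rightarrow> ('a::finite) option set"
    and Iv Pv :: "nat \<Rightarrow> 'a option set"
    and p0 :: 'g and l :: nat
  assumes "pd_trans_wf n Mb" and "l \<le> n"
  shows "mcfg_lang (GX n Mb Iv Pv p0) (GZ n Mb Iv p0) n l = pda_behaviour n Mb Iv Pv p0 l"
  unfolding mcfg_lang_eq pda_behaviour_def lderiv_X0_words_eq omega_lderivable_eq_behaviour ..

end
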